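(* Let $R$ be a localizable archimedean partially ordered commutative ring and let $q\in\mathrm{Loc}(R)$. Then $\mathrm{O}_{q<\infty}$ is dense in $\mathcal{K}(R)$.
   Context: Rings are commutative with unit; ring morphisms are unital. A partially ordered commutative ring is a commutative ring $R$ with partial order $\le$, $r\le s\Rightarrow r+t\le s+t$, positive cone $R^+$ closed under multiplication and containing all squares. $\mathbb{N}=\{1,2,\dots\}$, $\mathbb{N}_0=\mathbb{N}\cup\{0\}$. Archimedean: $kg+h\in R^+$ for all $k\in\mathbb{N}$ implies $g\in R^+$. $\mathrm{Loc}(R)$ is the set of $s\in1+R^+$ such that $rs\in R^+$ implies $r\in R^+$ for all $r$; localizable: every $r$ satisfies $-s\le r\le s$ for some $s\in\mathrm{Loc}(R)$. $R_{\mathrm{loc}}$: fractions $r/s$ ($r\in R$, $s\in\mathrm{Loc}(R)$), $r/s=r'/s'$ iff $rs'=r's$, ordered by $p/q\le r/s$ iff $ps\le rq$. $R^{\mathrm{bd}}_{\mathrm{loc}}=\{a:\exists n\in\mathbb{N}_0,\ -n\le a\le n\}$. $\mathcal{K}(R)$: ring morphisms $\varphi\colon R^{\mathrm{bd}}_{\mathrm{loc}}\to\mathbb{R}$ with $\varphi(a)\ge0$ for $a\ge0$, with the topology generated by the sets $\{\varphi:\varphi(a)\in V\}$, $a\in R^{\mathrm{bd}}_{\mathrm{loc}}$, $V\subseteq\mathbb{R}$ open. $\mathrm{O}_{q<\infty}=\{\varphi\in\mathcal{K}(R):\varphi(1/q)>0\}$. *)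

theory Defs
  imports "HOL-Analysis.Analysis"
begin

text \<open>A partially ordered commutative ring is encoded by its positive cone P:
  x \<le> y iff y - x \<in> P.  The cone axioms below are exactly: the order is a
  partial order compatible with addition, the positive cone is closed under
  multiplication and contains all squares.\<close>

definition po_cring :: "('a::comm_ring_1) set \<Rightarrow> bool" where
  "po_cring P \<longleftrightarrow>
     (\<forall>x\<in>P. \<forall>y\<in>P. x + y \<in> P) \<and>
     (\<forall>x\<in>P. \<forall>y\<in>P. x * y \<in> P) \<and>
     (\<forall>x. x * x \<in> P) \<and>
     (\<forall>x. x \<in> P \<and> - x \<in> P \<longrightarrow> x = 0)"

definition pleq :: "('a::comm_ring_1) set \<Rightarrow> 'a \<Rightarrow> 'a \<Rightarrow> bool" where
  "pleq P x y \<longleftrightarrow> y - x \<in> P"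

definition archimedean_po :: "('a::comm_ring_1) set \<Rightarrow> bool" where
  "archimedean_po P \<longleftrightarrow>
     (\<forall>g h. (\<forall>k::nat. k \<ge> 1 \<longrightarrow> of_nat k * g + h \<in> P) \<longrightarrow> g \<in> P)"

definition Loc :: "('a::comm_ring_1) set \<Rightarrow> 'a set" where
  "Loc P = {s. s - 1 \<in> P \<and> (\<forall>r. r * s \<in> P \<longrightarrow> r \<in> P)}"

definition localizable :: "('a::comm_ring_1) set \<Rightarrow> bool" where
  "localizable P \<longleftrightarrow> (\<forall>r. \<exists>s\<in>Loc P. pleq P (- s) r \<and> pleq P r s)"

text \<open>Elements of R_loc are represented by pairs (r,s) standing for r/s with s \<in> Loc P.\<close>

definition frac_eq :: "('a::comm_ring_1) \<times> 'a \<Rightarrow> 'a \<times> 'a \<Rightarrow> bool" where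
  "frac_eq a b \<longleftrightarrow> fst a * snd b = fst b * snd a"

definition frac_le :: "('a::comm_ring_1) set \<Rightarrow> 'a \<times> 'a \<Rightarrow> 'a \<times> 'a \<Rightarrow> bool" where
  "frac_le P a b \<longleftrightarrow> pleq P (fst a * snd b) (fst b * snd a)"

definition frac_add :: "('a::comm_ring_1) \<times> 'a \<Rightarrow> 'a \<times> 'a \<Rightarrow> 'a \<times> 'a" where
  "frac_add a b = (fst a * snd b + fst b * snd a, snd a * snd b)"

definition frac_mult :: "('a::comm_ring_1) \<times> 'a \<Rightarrow> 'a \<times> 'a \<Rightarrow> 'a \<times> 'a" where
  "frac_mult a b = (fst a * fst b, snd a * snd b)"

definition Rloc :: "('a::comm_ring_1) set \<Rightarrow> ('a \<times> 'a) set" where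
  "Rloc P = {a. snd a \<in> Loc P}"

definition Rbd :: "('a::comm_ring_1) set \<Rightarrow> ('a \<times> 'a) set" where
  "Rbd P = {a \<in> Rloc P. \<exists>n::nat. frac_le P (- of_nat n, 1) a \<and> frac_le P a (of_nat n, 1)}"

text \<open>K(R): positive unital ring morphisms R^bd_loc \<rightarrow> \<real>, represented as functions on
  representing pairs that respect equality of fractions, and are 0 outside R^bd_loc.\<close>
definition Kspace :: "('a::comm_ring_1) set \<Rightarrow> ('a \<times> 'a \<Rightarrow> real) set" where
  "Kspace P = {\<phi>.
     (\<forall>a. a \<notin> Rbd P \<longrightarrow> \<phi> a = 0) \<and>
     (\<forall>a\<in>Rbd P. \<forall>b\<in>Rbd P. frac_eq a b \<longrightarrow> \<phi> a = \<phi> b) \<and>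
     \<phi> (1, 1) = 1 \<and>
     (\<forall>a\<in>Rbd P. \<forall>b\<in>Rbd P. \<phi> (frac_add a b) = \<phi> a + \<phi> b) \<and>
     (\<forall>a\<in>Rbd P. \<forall>b\<in>Rbd P. \<phi> (frac_mult a b) = \<phi> a * \<phi> b) \<and>
     (\<forall>a\<in>Rbd P. frac_le P (0, 1) a \<longrightarrow> \<phi> a \<ge> 0)}"

definition Ktop :: "('a::comm_ring_1) set \<Rightarrow> ('a \<times> 'a \<Rightarrow> real) topology" where
  "Ktop P = topology_generated_by
     {{\<phi> \<in> Kspace P. \<phi> a \<in> V} | a V. a \<in> Rbd P \<and> open V}"

definition O_fin :: "('a::comm_ring_1) set \<Rightarrow> 'a \<Rightarrow> ('a \<times> 'a \<Rightarrow> real) set" where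
  "O_fin P q = {\<phi> \<in> Kspace P. \<phi> (1, q) > 0}"

end

theory Submission
  imports Defs
begin

text \<open>Since the elements of \<open>Loc(R)\<close> are non-zero-divisors, \<open>R\<^sup>b\<^sup>d\<^sub>l\<^sub>o\<^sub>c\<close> is a subring \<open>A\<close>
  of the total ring of fractions of \<open>R\<close>, with positive cone \<open>C\<close>; \<open>1\<close> is an order unit, and
  \<open>C\<close> is closed under division by positive integers and archimedean. For such a pair the
  Kadison--Dubois theorem holds: an element on which every character (positive unital ring
  morphism \<open>A \<rightarrow> \<real>\<close>) is nonnegative lies in \<open>C\<close>. The characters are exactly the points
  of \<open>\<K>(R)\<close>.

  Given a point \<open>\<phi>\<close> and a basic neighbourhood \<open>{\<psi>. \<forall>a\<in>F. \<bar>\<psi> a - \<phi> a\<bar> < \<epsilon>}\<close>, the element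
  \<open>f = |F| + 1 - \<Sum>\<^sub>a\<^sub>\<in>\<^sub>F (n a - \<lfloor>n \<phi>(a)\<rfloor>)\<^sup>2\<close> with \<open>n \<epsilon> \<ge> |F| + 2\<close> is \<open>\<ge> 1\<close> at \<open>\<phi>\<close> and \<open>\<le> 0\<close>
  outside the neighbourhood. If no point of the neighbourhood were positive at \<open>1/q\<close>, then
  \<open>-f/q\<close> would be nonnegative at every character, hence in \<open>C\<close>; as \<open>q \<in> Loc(R)\<close>, also
  \<open>-f \<in> C\<close>, contradicting \<open>\<phi>(f) \<ge> 1\<close>.\<close>

section \<open>The total ring of fractions\<close>

definition non_zero_divisor :: "'a::comm_ring_1 \<Rightarrow> bool" where
  "non_zero_divisor s \<longleftrightarrow> (\<forall>x. x * s = 0 \<longrightarrow> x = 0)"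

lemma non_zero_divisor_one: "non_zero_divisor 1"
  unfolding non_zero_divisor_def by simp

lemma non_zero_divisor_mult:
  "non_zero_divisor a \<Longrightarrow> non_zero_divisor b \<Longrightarrow> non_zero_divisor (a * b)"
  unfolding non_zero_divisor_def by (metis mult.assoc)

definition frac_rel :: "'a::comm_ring_1 \<times> 'a \<Rightarrow> 'a \<times> 'a \<Rightarrow> bool" where
  "frac_rel x y \<longleftrightarrow>
     non_zero_divisor (snd x) \<and> non_zero_divisor (snd y) \<and> fst x * snd y = fst y * snd x"

lemma transp_frac_rel: "transp (frac_rel :: 'a::comm_ring_1 \<times> 'a \<Rightarrow> _)"
proof (rule transpI, unfold split_paired_all frac_rel_def fst_conv snd_conv, elim conjE, intro conjI)
  fix a b a' b' a'' b'' :: 'a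
  assume e1: "a * b' = a' * b" and e2: "a' * b'' = a'' * b'" and b': "non_zero_divisor b'"
  have "(a * b'' - a'' * b) * b' = b'' * (a * b') - b * (a'' * b')"
    by (simp add: algebra_simps)
  also have "\<dots> = 0"
    by (simp add: e1 flip: e2)
  finally have "(a * b'' - a'' * b) * b' = 0" .
  with b' have "a * b'' - a'' * b = 0"
    unfolding non_zero_divisor_def by blast
  then show "a * b'' = a'' * b"
    by simp
qed

lemma part_equivp_frac_rel: "part_equivp (frac_rel :: 'a::comm_ring_1 \<times> 'a \<Rightarrow> _)"
  by (rule part_equivpI)
    (auto intro!: exI[of _ "(0, 1)"] exI[of _ 1] simp: frac_rel_def non_zero_divisor_one symp_def transp_frac_rel)

quotient_type (overloaded) 'a fraction = "'a::comm_ring_1 \<times> 'a" / partial: frac_rel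
  by (rule part_equivp_frac_rel)

text \<open>Fractions with a zero divisor as denominator are junk and collapse to 0.\<close>

lift_definition Fraction :: "'a::comm_ring_1 \<Rightarrow> 'a \<Rightarrow> 'a fraction"
  is "\<lambda>a b. if non_zero_divisor b then (a, b) else (0, 1)"
  by (simp add: frac_rel_def non_zero_divisor_one)

lemma Fraction_cases [cases type: fraction]:
  obtains (Fraction) a b where "q = Fraction a b" "non_zero_divisor b"
  by transfer (auto simp: frac_rel_def)

lemma eq_Fraction:
  "non_zero_divisor b \<Longrightarrow> non_zero_divisor d \<Longrightarrow> Fraction a b = Fraction c d \<longleftrightarrow> a * d = c * b"
  by transfer (simp add: frac_rel_def)

instantiation fraction :: (comm_ring_1) comm_ring_1
begin

lift_definition zero_fraction :: "'a fraction" is "(0, 1)"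
  by (simp add: frac_rel_def non_zero_divisor_one)

lift_definition one_fraction :: "'a fraction" is "(1, 1)"
  by (simp add: frac_rel_def non_zero_divisor_one)

lift_definition plus_fraction :: "'a fraction \<Rightarrow> 'a fraction \<Rightarrow> 'a fraction"
  is "\<lambda>x y. (fst x * snd y + fst y * snd x, snd x * snd y)"
proof (unfold split_paired_all frac_rel_def fst_conv snd_conv, elim conjE, intro conjI)
  fix a b c d a' b' c' d' :: 'a
  assume e1: "a * b' = a' * b" and e2: "c * d' = c' * d"
  have "(a * d + c * b) * (b' * d') = (a * b') * (d * d') + (c * d') * (b * b')"
    by (simp add: algebra_simps)
  also have "\<dots> = (a' * d' + c' * b') * (b * d)"
    by (simp add: e1 e2 algebra_simps)
  finally show "(a * d + c * b) * (b' * d') = (a' * d' + c' * b') * (b * d)" .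
qed (simp_all add: non_zero_divisor_mult)

lift_definition uminus_fraction :: "'a fraction \<Rightarrow> 'a fraction"
  is "\<lambda>x. (- fst x, snd x)"
  by (simp add: frac_rel_def)

definition minus_fraction_def: "x - y = x + - (y::'a fraction)"

lift_definition times_fraction :: "'a fraction \<Rightarrow> 'a fraction \<Rightarrow> 'a fraction"
  is "\<lambda>x y. (fst x * fst y, snd x * snd y)"
proof (unfold split_paired_all frac_rel_def fst_conv snd_conv, elim conjE, intro conjI)
  fix a b c d a' b' c' d' :: 'a
  assume e1: "a * b' = a' * b" and e2: "c * d' = c' * d"
  have "(a * c) * (b' * d') = (a * b') * (c * d')"
    by (simp add: algebra_simps)
  also have "\<dots> = (a' * c') * (b * d)"
    by (simp add: e1 e2 algebra_simps)
  finally show "(a * c) * (b' * d') = (a' * c') * (b * d)" .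
qed (simp_all add: non_zero_divisor_mult)

lemma zero_Fraction: "0 = Fraction 0 1"
  by transfer (simp add: frac_rel_def non_zero_divisor_one)

lemma one_Fraction: "1 = Fraction 1 1"
  by transfer (simp add: frac_rel_def non_zero_divisor_one)

lemma add_Fraction [simp]:
  "non_zero_divisor b \<Longrightarrow> non_zero_divisor d \<Longrightarrow> Fraction a b + Fraction c d = Fraction (a * d + c * b) (b * d)"
  by transfer (simp add: frac_rel_def non_zero_divisor_mult)

lemma minus_Fraction [simp]: "non_zero_divisor b \<Longrightarrow> - Fraction a b = Fraction (- a) b"
  by transfer (simp add: frac_rel_def)

lemma mult_Fraction [simp]:
  "non_zero_divisor b \<Longrightarrow> non_zero_divisor d \<Longrightarrow> Fraction a b * Fraction c d = Fraction (a * c) (b * d)"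
  by transfer (simp add: frac_rel_def non_zero_divisor_mult)

instance
proof
  fix x y z :: "'a fraction"
  show "(x * y) * z = x * (y * z)" "(x + y) + z = x + (y + z)" "(x + y) * z = x * z + y * z"
    by (cases x, cases y, cases z, simp add: eq_Fraction non_zero_divisor_mult algebra_simps)+
  show "x * y = y * x" "x + y = y + x"
    by (cases x, cases y, simp add: eq_Fraction non_zero_divisor_mult algebra_simps)+
  show "1 * x = x" "0 + x = x" "- x + x = 0"
    by (cases x, simp add: one_Fraction zero_Fraction eq_Fraction non_zero_divisor_one non_zero_divisor_mult)+
  show "x - y = x + - y"
    by (simp add: minus_fraction_def)
  show "(0::'a fraction) \<noteq> 1"
    by (simp add: zero_Fraction one_Fraction eq_Fraction non_zero_divisor_one)
qed

end

lemma of_nat_Fraction: "of_nat n = Fraction (of_nat n) 1"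
  by (induct n) (simp_all add: zero_Fraction one_Fraction non_zero_divisor_one)

section \<open>A Kadison--Dubois representation theorem\<close>

locale archimedean_preordering =
  fixes A C :: "'b::comm_ring_1 set"
  assumes A_add: "x \<in> A \<Longrightarrow> y \<in> A \<Longrightarrow> x + y \<in> A"
    and A_mult: "x \<in> A \<Longrightarrow> y \<in> A \<Longrightarrow> x * y \<in> A"
    and A_uminus: "x \<in> A \<Longrightarrow> - x \<in> A"
    and A_one: "1 \<in> A"
    and C_subset: "C \<subseteq> A"
    and C_add: "x \<in> C \<Longrightarrow> y \<in> C \<Longrightarrow> x + y \<in> C"
    and C_mult: "x \<in> C \<Longrightarrow> y \<in> C \<Longrightarrow> x * y \<in> C"
    and C_square: "x \<in> A \<Longrightarrow> x * x \<in> C"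
    and order_unit: "x \<in> A \<Longrightarrow> \<exists>n::nat. of_nat n - x \<in> C"
    and C_of_nat_mult_cancel: "x \<in> A \<Longrightarrow> n > 0 \<Longrightarrow> of_nat n * x \<in> C \<Longrightarrow> x \<in> C"
    and archimedean: "x \<in> A \<Longrightarrow> h \<in> A \<Longrightarrow> (\<And>k::nat. k \<ge> 1 \<Longrightarrow> of_nat k * x + h \<in> C) \<Longrightarrow> x \<in> C"
begin

lemma A_zero: "0 \<in> A"
  using A_add[OF A_one A_uminus[OF A_one]] by simp

lemma A_diff: "x \<in> A \<Longrightarrow> y \<in> A \<Longrightarrow> x - y \<in> A"
  using A_add[of x "- y"] A_uminus[of y] by simp

lemma A_of_nat: "of_nat n \<in> A"
  by (induct n) (auto simp: A_zero A_one A_add)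

lemma A_of_int: "of_int k \<in> A"
  by (cases k rule: int_cases2) (auto simp: A_of_nat A_uminus)

lemma A_sum: "finite F \<Longrightarrow> (\<And>x. x \<in> F \<Longrightarrow> f x \<in> A) \<Longrightarrow> sum f F \<in> A"
  by (induct F rule: finite_induct) (auto intro: A_add A_zero)

lemma C_zero: "0 \<in> C"
  using C_square[OF A_zero] by simp

lemma C_one: "1 \<in> C"
  using C_square[OF A_one] by simp

lemma C_of_nat: "of_nat n \<in> C"
  by (induct n) (auto simp: C_zero C_one C_add)

definition characters :: "('b \<Rightarrow> real) set" where
  "characters = {\<psi>. \<psi> 1 = 1 \<and> (\<forall>x\<in>A. \<forall>y\<in>A. \<psi> (x + y) = \<psi> x + \<psi> y) \<and>
     (\<forall>x\<in>A. \<forall>y\<in>A. \<psi> (x * y) = \<psi> x * \<psi> y) \<and> (\<forall>x\<in>C. 0 \<le> \<psi> x)}"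

context
  fixes \<psi> assumes \<psi>: "\<psi> \<in> characters"
begin

lemma characters_one: "\<psi> 1 = 1"
  using \<psi> unfolding characters_def by blast

lemma characters_add: "x \<in> A \<Longrightarrow> y \<in> A \<Longrightarrow> \<psi> (x + y) = \<psi> x + \<psi> y"
  using \<psi> unfolding characters_def by blast

lemma characters_mult: "x \<in> A \<Longrightarrow> y \<in> A \<Longrightarrow> \<psi> (x * y) = \<psi> x * \<psi> y"
  using \<psi> unfolding characters_def by blast

lemma characters_nonneg: "x \<in> C \<Longrightarrow> 0 \<le> \<psi> x"
  using \<psi> unfolding characters_def by blast

lemma characters_zero: "\<psi> 0 = 0"
  using characters_add[OF A_zero A_zero] by simp

lemma characters_uminus: "x \<in> A \<Longrightarrow> \<psi> (- x) = - \<psi> x"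
  using characters_add[of x "- x"] A_uminus[of x] by (simp add: characters_zero)

lemma characters_diff: "x \<in> A \<Longrightarrow> y \<in> A \<Longrightarrow> \<psi> (x - y) = \<psi> x - \<psi> y"
  using characters_add[of x "- y"] characters_uminus[of y] A_uminus[of y] by simp

lemma characters_of_nat: "\<psi> (of_nat n) = real n"
  by (induct n) (simp_all add: characters_zero characters_one characters_add A_one A_of_nat)

lemma characters_of_int: "\<psi> (of_int k) = real_of_int k"
  by (cases k rule: int_cases2) (simp_all add: characters_of_nat characters_uminus A_of_nat)

lemma characters_sum: "finite F \<Longrightarrow> (\<And>x. x \<in> F \<Longrightarrow> f x \<in> A) \<Longrightarrow> \<psi> (sum f F) = (\<Sum>x\<in>F. \<psi> (f x))"
  by (induct F rule: finite_induct) (simp_all add: characters_zero characters_add A_sum)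

end

subsection \<open>Maximal proper preorderings\<close>

definition preordering :: "'b set \<Rightarrow> bool" where
  "preordering T \<longleftrightarrow> T \<subseteq> A \<and> C \<subseteq> T \<and> (\<forall>x\<in>T. \<forall>y\<in>T. x + y \<in> T) \<and> (\<forall>x\<in>T. \<forall>y\<in>T. x * y \<in> T)"

definition proper_preordering :: "'b set \<Rightarrow> bool" where
  "proper_preordering T \<longleftrightarrow> preordering T \<and> - 1 \<notin> T"

lemma preordering_C: "preordering C"
  unfolding preordering_def using C_subset C_add C_mult by blast

lemma proper_preordering_Union_chain:
  assumes "Ts \<noteq> {}" and proper: "\<And>T. T \<in> Ts \<Longrightarrow> proper_preordering T"
    and chain: "\<And>S T. S \<in> Ts \<Longrightarrow> T \<in> Ts \<Longrightarrow> S \<subseteq> T \<or> T \<subseteq> S"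
  shows "proper_preordering (\<Union>Ts)"
proof -
  have closed: "x + y \<in> \<Union>Ts \<and> x * y \<in> \<Union>Ts" if "x \<in> \<Union>Ts" "y \<in> \<Union>Ts" for x y
  proof -
    from that obtain S T where ST: "S \<in> Ts" "T \<in> Ts" "x \<in> S" "y \<in> T"
      by blast
    then obtain U where "U \<in> Ts" "x \<in> U" "y \<in> U"
      using chain[OF ST(1,2)] by blast
    with proper[of U] show ?thesis
      unfolding proper_preordering_def preordering_def by blast
  qed
  have "\<Union>Ts \<subseteq> A" "- 1 \<notin> \<Union>Ts"
    using proper unfolding proper_preordering_def preordering_def by blast+
  moreover have "C \<subseteq> \<Union>Ts"
    using assms(1) proper unfolding proper_preordering_def preordering_def by blast
  ultimately show ?thesis
    using closed unfolding proper_preordering_def preordering_def by blast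
qed

lemma maximal_proper_preordering_exists:
  assumes "proper_preordering T0"
  obtains T where "T0 \<subseteq> T" "proper_preordering T"
    "\<And>T'. proper_preordering T' \<Longrightarrow> T \<subseteq> T' \<Longrightarrow> T' = T"
proof -
  let ?S = "{T. proper_preordering T \<and> T0 \<subseteq> T}"
  have "T0 \<in> ?S"
    using assms by simp
  then have "?S \<noteq> {}"
    by blast
  then have "\<exists>T\<in>?S. \<forall>T'\<in>?S. T \<subseteq> T' \<longrightarrow> T' = T"
  proof (rule subset_Zorn_nonempty)
    fix Ts assume Ts: "Ts \<noteq> {}" "subset.chain ?S Ts"
    then have "proper_preordering (\<Union>Ts)"
      by (intro proper_preordering_Union_chain) (auto simp: subset_chain_def)
    moreover have "T0 \<subseteq> \<Union>Ts"
      using Ts unfolding subset_chain_def by blast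
    ultimately show "\<Union>Ts \<in> ?S"
      by simp
  qed
  then obtain T where T: "T \<in> ?S" "\<forall>T'\<in>?S. T \<subseteq> T' \<longrightarrow> T' = T"
    by blast
  show ?thesis
  proof (rule that)
    show "T0 \<subseteq> T" "proper_preordering T"
      using T(1) by simp_all
    show "T' = T" if "proper_preordering T'" "T \<subseteq> T'" for T'
      using T that by blast
  qed
qed

definition adjoin :: "'b set \<Rightarrow> 'b \<Rightarrow> 'b set" where
  "adjoin T y = {s + y * t | s t. s \<in> T \<and> t \<in> T}"

lemma preordering_adjoin:
  assumes T: "preordering T" and y: "y \<in> A"
  shows "preordering (adjoin T y)"
  unfolding preordering_def
proof (intro conjI ballI subsetI)
  have T0: "0 \<in> T" using T C_zero unfolding preordering_def by blast
  show "c \<in> adjoin T y" if "c \<in> C" for c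
  proof -
    have "c = c + y * 0" "c \<in> T"
      using that T unfolding preordering_def by auto
    with T0 show ?thesis
      unfolding adjoin_def by blast
  qed
  show "a \<in> A" if "a \<in> adjoin T y" for a
    using that T y unfolding adjoin_def preordering_def by (auto intro!: A_add A_mult)
next
  fix a b assume "a \<in> adjoin T y" "b \<in> adjoin T y"
  then obtain s1 t1 s2 t2 where st: "a = s1 + y * t1" "b = s2 + y * t2" "s1 \<in> T" "t1 \<in> T" "s2 \<in> T" "t2 \<in> T"
    unfolding adjoin_def by blast
  have yy: "y * y \<in> T" using T C_square[OF y] unfolding preordering_def by blast
  have "a + b = (s1 + s2) + y * (t1 + t2)"
    using st by (simp add: algebra_simps)
  moreover have "s1 + s2 \<in> T" "t1 + t2 \<in> T"
    using st T unfolding preordering_def by auto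
  ultimately show "a + b \<in> adjoin T y"
    unfolding adjoin_def by blast
  have "a * b = (s1 * s2 + (y * y) * (t1 * t2)) + y * (s1 * t2 + t1 * s2)"
    using st by (simp add: algebra_simps)
  moreover have "s1 * s2 + (y * y) * (t1 * t2) \<in> T" "s1 * t2 + t1 * s2 \<in> T"
    using st T yy unfolding preordering_def by auto
  ultimately show "a * b \<in> adjoin T y"
    unfolding adjoin_def by blast
qed

lemma subset_adjoin: "preordering T \<Longrightarrow> T \<subseteq> adjoin T y"
proof
  fix s assume "preordering T" "s \<in> T"
  moreover have "s = s + y * 0" by simp
  ultimately show "s \<in> adjoin T y"
    unfolding adjoin_def preordering_def using C_zero by blast
qed

lemma mem_adjoin: "preordering T \<Longrightarrow> y \<in> adjoin T y"
proof -
  assume "preordering T"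
  moreover have "y = 0 + y * 1" by simp
  ultimately show ?thesis
    unfolding adjoin_def preordering_def using C_zero C_one by blast
qed

text \<open>If both \<open>T + xT\<close> and \<open>T - xT\<close> contain \<open>-1\<close>, multiplying the two representations
  exhibits \<open>-1\<close> in \<open>T\<close>.\<close>

lemma minus_one_adjoin_uminus:
  assumes T: "preordering T" and x: "x \<in> A"
    and "- 1 \<in> adjoin T x" "- 1 \<in> adjoin T (- x)"
  shows "- 1 \<in> T"
proof -
  obtain s1 t1 s2 t2 where st: "- 1 = s1 + x * t1" "- 1 = s2 + (- x) * t2"
    "s1 \<in> T" "t1 \<in> T" "s2 \<in> T" "t2 \<in> T"
    using assms(3,4) unfolding adjoin_def by blast
  have "- 1 = s1 + s2 + s1 * s2 + (x * x) * (t1 * t2)"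
  proof -
    have s1: "s1 = - 1 - x * t1" and s2: "s2 = - 1 + x * t2"
      using st(1,2) by (simp_all add: algebra_simps)
    show ?thesis
      unfolding s1 s2 by (simp add: algebra_simps)
  qed
  also have "\<dots> \<in> T"
    using st T C_square[OF x] unfolding preordering_def by (simp add: subset_iff)
  finally show ?thesis .
qed

lemma maximal_proper_preordering_total:
  assumes T: "proper_preordering T"
    and max: "\<And>T'. proper_preordering T' \<Longrightarrow> T \<subseteq> T' \<Longrightarrow> T' = T"
    and x: "x \<in> A"
  shows "x \<in> T \<or> - x \<in> T"
proof -
  have minus_one: "- 1 \<in> adjoin T y" if y: "y \<in> A" "y \<notin> T" for y
  proof (rule ccontr)
    assume "- 1 \<notin> adjoin T y"
    with T y have "proper_preordering (adjoin T y)"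
      unfolding proper_preordering_def by (simp add: preordering_adjoin)
    with T have "adjoin T y = T"
      by (intro max) (simp_all add: subset_adjoin proper_preordering_def)
    with T mem_adjoin[of T y] y show False
      unfolding proper_preordering_def by blast
  qed
  show ?thesis
  proof (rule ccontr)
    assume "\<not> (x \<in> T \<or> - x \<in> T)"
    then have "- 1 \<in> adjoin T x" "- 1 \<in> adjoin T (- x)"
      using x A_uminus[OF x] by (simp_all add: minus_one)
    then have "- 1 \<in> T"
      using T x minus_one_adjoin_uminus unfolding proper_preordering_def by blast
    with T show False
      unfolding proper_preordering_def by blast
  qed
qed

end

subsection \<open>The character of a total preordering\<close>

lemma eq_if_abs_diff_le_div_nat:
  fixes a b K :: real
  assumes "\<And>N::nat. N > 0 \<Longrightarrow> \<bar>a - b\<bar> \<le> K / real N"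
  shows "a = b"
proof (rule ccontr)
  assume "a \<noteq> b"
  then have pos: "\<bar>a - b\<bar> > 0"
    by simp
  obtain N :: nat where "K / \<bar>a - b\<bar> < real N"
    using reals_Archimedean2 by blast
  then have N: "Suc N > 0" "K / \<bar>a - b\<bar> < real (Suc N)"
    by simp_all
  then have "K / real (Suc N) < \<bar>a - b\<bar>"
    using pos by (simp add: divide_less_eq mult.commute)
  with assms[OF N(1)] show False
    by simp
qed

lemma exists_int_div_nat_below:
  fixes v :: real
  assumes "N > 0"
  obtains m :: int where "real_of_int m / real N < v" "v - 1 / real N \<le> real_of_int m / real N"
proof
  let ?m = "\<lceil>real N * v\<rceil> - 1"
  have "real_of_int ?m < real N * v" "real N * v \<le> real_of_int ?m + 1"
    by linarith+
  with assms show "real_of_int ?m / real N < v" "v - 1 / real N \<le> real_of_int ?m / real N"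
    by (simp_all add: field_simps)
qed

lemma exists_int_div_nat_above:
  fixes v :: real
  assumes "N > 0"
  obtains m :: int where "v < real_of_int m / real N" "real_of_int m / real N \<le> v + 1 / real N"
proof
  let ?m = "\<lfloor>real N * v\<rfloor> + 1"
  have "real N * v < real_of_int ?m" "real_of_int ?m \<le> real N * v + 1"
    by linarith+
  with assms show "v < real_of_int ?m / real N" "real_of_int ?m / real N \<le> v + 1 / real N"
    by (simp_all add: field_simps)
qed

lemma mult_ge_of_approx_below:
  fixes p q u w e :: real
  assumes "0 \<le> p" "0 \<le> q" "0 \<le> u" "0 \<le> w" "p - e \<le> u" "q - e \<le> w" "0 \<le> e"
  shows "p * q - e * (p + q) \<le> u * w"
proof (cases "e \<le> p \<and> e \<le> q")
  case True
  then have "(p - e) * (q - e) \<le> u * w"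
    using assms by (intro mult_mono) auto
  moreover have "p * q - e * (p + q) \<le> (p - e) * (q - e)"
    by (simp add: algebra_simps)
  ultimately show ?thesis
    by linarith
next
  case False
  then have "p * q \<le> e * q \<or> p * q \<le> p * e"
    using assms by (auto intro: mult_right_mono mult_left_mono)
  moreover have "0 \<le> e * p" "0 \<le> e * q" "0 \<le> u * w"
    using assms by simp_all
  ultimately show ?thesis
    by (auto simp: algebra_simps)
qed

lemma mult_le_of_approx_above:
  fixes p q u w e :: real
  assumes "0 \<le> p" "0 \<le> q" "u \<le> p + e" "w \<le> q + e" "0 \<le> u" "0 \<le> w" "0 \<le> e" "e \<le> 1"
  shows "u * w \<le> p * q + e * (p + q + 1)"
proof -
  have "u * w \<le> (p + e) * (q + e)"
    using assms by (intro mult_mono) auto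
  moreover have "e * e \<le> e"
    using assms by (simp add: mult_left_le)
  ultimately show ?thesis
    by (simp add: algebra_simps)
qed

locale total_preordering = archimedean_preordering A C for A C :: "'b::comm_ring_1 set" +
  fixes T :: "'b set"
  assumes proper: "proper_preordering T"
    and total: "x \<in> A \<Longrightarrow> x \<in> T \<or> - x \<in> T"
begin

lemma T_subset: "T \<subseteq> A" and C_subset_T: "C \<subseteq> T"
  and T_add: "x \<in> T \<Longrightarrow> y \<in> T \<Longrightarrow> x + y \<in> T"
  and T_mult: "x \<in> T \<Longrightarrow> y \<in> T \<Longrightarrow> x * y \<in> T"
  and minus_one_notin_T: "- 1 \<notin> T"
  using proper unfolding proper_preordering_def preordering_def by blast+

lemma T_of_nat: "of_nat n \<in> T"
  using C_subset_T C_of_nat by blast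

lemma T_of_int: "k \<ge> 0 \<Longrightarrow> of_int k \<in> T"
  using T_of_nat[of "nat k"] by simp

lemma nonneg_if_of_int_in_T:
  assumes "of_int k \<in> T"
  shows "0 \<le> k"
proof (rule ccontr)
  assume "\<not> 0 \<le> k"
  then have "of_int k + of_int (- k - 1) \<in> T"
    using T_add[OF assms T_of_int[of "- k - 1"]] by simp
  moreover have "of_int k + of_int (- k - 1) = (- 1 :: 'b)"
    by (simp flip: of_int_add)
  ultimately show False
    using minus_one_notin_T by simp
qed

lemma rat_le_if_in_T:
  assumes "n > 0" "n' > 0" "of_nat n * x - of_int m \<in> T" "of_int m' - of_nat n' * x \<in> T"
  shows "real_of_int m / real n \<le> real_of_int m' / real n'"
proof -
  have "of_nat n' * (of_nat n * x - of_int m) + of_nat n * (of_int m' - of_nat n' * x) \<in> T"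
    using assms by (intro T_add T_mult T_of_nat)
  also have "of_nat n' * (of_nat n * x - of_int m) + of_nat n * (of_int m' - of_nat n' * x)
        = (of_int (int n * m' - int n' * m) :: 'b)"
    by (simp add: algebra_simps)
  finally have "int n' * m \<le> int n * m'"
    using nonneg_if_of_int_in_T by fastforce
  then have "real n' * real_of_int m \<le> real n * real_of_int m'"
    by (metis of_int_le_iff of_int_mult of_int_of_nat_eq)
  with assms(1,2) show ?thesis
    by (simp add: field_simps)
qed

definition rat_below :: "'b \<Rightarrow> real set" where
  "rat_below x = {real_of_int m / real n | m n. n > 0 \<and> of_nat n * x - of_int m \<in> T}"

text \<open>\<open>T_character x\<close> is the cut in \<open>\<rat>\<close> that \<open>x\<close> determines with respect to the total
  order given by \<open>T\<close>.\<close>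

definition T_character :: "'b \<Rightarrow> real" where
  "T_character x = Sup (rat_below x)"

lemma rat_below_nonempty: "x \<in> A \<Longrightarrow> rat_below x \<noteq> {}"
proof -
  assume "x \<in> A"
  then obtain N :: nat where "of_nat N - (- x) \<in> C"
    using order_unit A_uminus by blast
  then have "of_nat 1 * x - of_int (- int N) \<in> T"
    using C_subset_T by (auto simp: algebra_simps)
  then show ?thesis
    unfolding rat_below_def by blast
qed

lemma bdd_above_rat_below: "x \<in> A \<Longrightarrow> bdd_above (rat_below x)"
proof -
  assume "x \<in> A"
  then obtain N :: nat where "of_nat N - x \<in> C"
    using order_unit by blast
  then have N: "of_int (int N) - of_nat 1 * x \<in> T"
    using C_subset_T by auto
  show ?thesis
    unfolding bdd_above_def rat_below_def using rat_le_if_in_T[OF _ _ _ N] by auto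
qed

lemma le_T_character:
  assumes "x \<in> A" "n > 0" "of_nat n * x - of_int m \<in> T"
  shows "real_of_int m / real n \<le> T_character x"
  unfolding T_character_def using assms
  by (intro cSup_upper bdd_above_rat_below) (auto simp: rat_below_def)

lemma T_character_le:
  assumes "x \<in> A" "n > 0" "of_int m - of_nat n * x \<in> T"
  shows "T_character x \<le> real_of_int m / real n"
  unfolding T_character_def
  using assms rat_below_nonempty rat_le_if_in_T[OF _ assms(2) _ assms(3)]
  by (intro cSup_least) (auto simp: rat_below_def)

lemma in_T_if_lt_T_character:
  assumes "x \<in> A" "n > 0" "real_of_int m / real n < T_character x"
  shows "of_nat n * x - of_int m \<in> T"
proof (rule ccontr)
  assume "of_nat n * x - of_int m \<notin> T"
  with total[of "of_nat n * x - of_int m"] assms(1) have "of_int m - of_nat n * x \<in> T"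
    by (simp add: A_diff A_mult A_of_nat A_of_int)
  then have "T_character x \<le> real_of_int m / real n"
    using T_character_le assms(1,2) by blast
  with assms(3) show False
    by linarith
qed

lemma in_T_if_T_character_lt:
  assumes "x \<in> A" "n > 0" "T_character x < real_of_int m / real n"
  shows "of_int m - of_nat n * x \<in> T"
proof (rule ccontr)
  assume "of_int m - of_nat n * x \<notin> T"
  with total[of "of_int m - of_nat n * x"] assms(1) have "of_nat n * x - of_int m \<in> T"
    by (simp add: A_diff A_mult A_of_nat A_of_int)
  then have "real_of_int m / real n \<le> T_character x"
    using le_T_character assms(1,2) by blast
  with assms(3) show False
    by linarith
qed

lemma T_character_add:
  assumes x: "x \<in> A" and y: "y \<in> A"
  shows "T_character (x + y) = T_character x + T_character y"
proof (rule eq_if_abs_diff_le_div_nat[where K = 2])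
  fix N :: nat assume N: "N > 0"
  obtain a b where a: "real_of_int a / real N < T_character x" "T_character x - 1 / real N \<le> real_of_int a / real N"
    and b: "real_of_int b / real N < T_character y" "T_character y - 1 / real N \<le> real_of_int b / real N"
    using exists_int_div_nat_below[OF N] by metis
  have "of_nat N * x - of_int a + (of_nat N * y - of_int b) \<in> T"
    using in_T_if_lt_T_character[OF x N a(1)] in_T_if_lt_T_character[OF y N b(1)] by (rule T_add)
  then have "of_nat N * (x + y) - of_int (a + b) \<in> T"
    by (simp add: algebra_simps)
  then have lower: "real_of_int (a + b) / real N \<le> T_character (x + y)"
    using le_T_character x y N A_add by blast
  obtain c d where c: "T_character x < real_of_int c / real N" "real_of_int c / real N \<le> T_character x + 1 / real N"
    and d: "T_character y < real_of_int d / real N" "real_of_int d / real N \<le> T_character y + 1 / real N"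
    using exists_int_div_nat_above[OF N] by metis
  have "of_int c - of_nat N * x + (of_int d - of_nat N * y) \<in> T"
    using in_T_if_T_character_lt[OF x N c(1)] in_T_if_T_character_lt[OF y N d(1)] by (rule T_add)
  then have "of_int (c + d) - of_nat N * (x + y) \<in> T"
    by (simp add: algebra_simps)
  then have upper: "T_character (x + y) \<le> real_of_int (c + d) / real N"
    using T_character_le x y N A_add by blast
  have "real_of_int (a + b) / real N = real_of_int a / real N + real_of_int b / real N"
       "real_of_int (c + d) / real N = real_of_int c / real N + real_of_int d / real N"
    by (simp_all add: add_divide_distrib)
  with a b c d lower upper show "\<bar>T_character (x + y) - (T_character x + T_character y)\<bar> \<le> 2 / real N"
    by (simp add: abs_le_iff)
qed

lemma T_character_of_int: "T_character (of_int k) = real_of_int k"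
proof -
  have "of_nat 1 * of_int k - of_int k \<in> T" "of_int k - of_nat 1 * of_int k \<in> T"
    using T_of_nat[of 0] by simp_all
  with le_T_character[of "of_int k" 1 k] T_character_le[of "of_int k" 1 k] A_of_int show ?thesis
    by simp
qed

lemma T_character_of_nat: "T_character (of_nat n) = real n"
  using T_character_of_int[of "int n"] by simp

lemma T_character_nonneg: "x \<in> T \<Longrightarrow> 0 \<le> T_character x"
  using le_T_character[of x 1 0] T_subset by auto

lemma T_character_uminus: "x \<in> A \<Longrightarrow> T_character (- x) = - T_character x"
  using T_character_add[of x "- x"] T_character_of_int[of 0] A_uminus by simp

lemma T_character_of_nat_mult: "x \<in> A \<Longrightarrow> T_character (of_nat n * x) = real n * T_character x"
proof (induct n)
  case 0
  then show ?case
    using T_character_of_nat[of 0] by simp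
next
  case (Suc n)
  then have "T_character (x + of_nat n * x) = T_character x + real n * T_character x"
    by (simp add: T_character_add A_mult A_of_nat)
  then show ?case
    by (simp add: algebra_simps)
qed

lemma T_approx_below:
  assumes z: "z \<in> T" and N: "N > 0"
  obtains a :: int where "0 \<le> a" "of_nat N * z - of_int a \<in> T"
    "T_character z - 1 / real N \<le> real_of_int a / real N"
proof -
  obtain a where a: "real_of_int a / real N < T_character z"
    "T_character z - 1 / real N \<le> real_of_int a / real N"
    using exists_int_div_nat_below[OF N] by blast
  show ?thesis
  proof (cases "0 \<le> a")
    case True
    with a z N show ?thesis
      using that in_T_if_lt_T_character T_subset by blast
  next
    case False
    then have "real_of_int a / real N \<le> 0"
      using N by (simp add: divide_nonpos_pos)
    moreover have "of_nat N * z - of_int 0 \<in> T"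
      using z T_mult T_of_nat by simp
    ultimately show ?thesis
      using that[of 0] a(2) by simp
  qed
qed

lemma T_character_mult_lower:
  assumes x: "x \<in> T" and y: "y \<in> T" and N: "N > 0"
  shows "T_character x * T_character y - (T_character x + T_character y) / real N
    \<le> T_character (x * y)"
proof -
  obtain a where a: "0 \<le> a" "of_nat N * x - of_int a \<in> T"
    "T_character x - 1 / real N \<le> real_of_int a / real N"
    using T_approx_below[OF x N] .
  obtain b where b: "0 \<le> b" "of_nat N * y - of_int b \<in> T"
    "T_character y - 1 / real N \<le> real_of_int b / real N"
    using T_approx_below[OF y N] .
  have "(of_nat N * x - of_int a) * (of_nat N * y) + of_int a * (of_nat N * y - of_int b) \<in> T"
    using a b y by (intro T_add T_mult T_of_nat T_of_int)
  also have "(of_nat N * x - of_int a) * (of_nat N * y) + of_int a * (of_nat N * y - of_int b)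
      = of_nat (N * N) * (x * y) - (of_int (a * b) :: 'b)"
    by (simp add: algebra_simps)
  finally have "real_of_int (a * b) / real (N * N) \<le> T_character (x * y)"
    using le_T_character x y N T_subset A_mult by (metis nat_0_less_mult_iff subsetD)
  moreover have "T_character x * T_character y - (T_character x + T_character y) / real N
      \<le> (real_of_int a / real N) * (real_of_int b / real N)"
    using mult_ge_of_approx_below[of "T_character x" "T_character y" "real_of_int a / real N"
        "real_of_int b / real N" "1 / real N"] a b x y T_character_nonneg by simp
  ultimately show ?thesis
    by simp
qed

lemma T_character_mult_upper:
  assumes x: "x \<in> T" and y: "y \<in> T" and N: "N > 0"
  shows "T_character (x * y)
    \<le> T_character x * T_character y + (T_character x + T_character y + 1) / real N"
proof -
  have xA: "x \<in> A" and yA: "y \<in> A" and nonneg: "0 \<le> T_character x" "0 \<le> T_character y"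
    using x y T_subset T_character_nonneg by auto
  obtain c d where c: "T_character x < real_of_int c / real N" "real_of_int c / real N \<le> T_character x + 1 / real N"
    and d: "T_character y < real_of_int d / real N" "real_of_int d / real N \<le> T_character y + 1 / real N"
    using exists_int_div_nat_above[OF N] by metis
  have "0 < real_of_int c / real N" "0 < real_of_int d / real N"
    using c(1) d(1) nonneg by linarith+
  then have c0: "0 \<le> c" and d0: "0 \<le> d"
    by (simp_all add: zero_less_divide_iff)
  have "of_int d * (of_int c - of_nat N * x) + (of_nat N * x) * (of_int d - of_nat N * y) \<in> T"
    using in_T_if_T_character_lt[OF xA N c(1)] in_T_if_T_character_lt[OF yA N d(1)] c0 d0 x
    by (intro T_add T_mult T_of_nat T_of_int)
  also have "of_int d * (of_int c - of_nat N * x) + (of_nat N * x) * (of_int d - of_nat N * y)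
      = (of_int (c * d) :: 'b) - of_nat (N * N) * (x * y)"
    by (simp add: algebra_simps)
  finally have "T_character (x * y) \<le> real_of_int (c * d) / real (N * N)"
    using T_character_le xA yA N A_mult by (metis nat_0_less_mult_iff)
  also have "\<dots> \<le> T_character x * T_character y + (T_character x + T_character y + 1) / real N"
    using mult_le_of_approx_above[of "T_character x" "T_character y" "real_of_int c / real N"
        "1 / real N" "real_of_int d / real N"] c d c0 d0 nonneg N by simp
  finally show ?thesis .
qed

lemma T_character_mult_T:
  assumes x: "x \<in> T" and y: "y \<in> T"
  shows "T_character (x * y) = T_character x * T_character y"
proof (rule eq_if_abs_diff_le_div_nat[where K = "T_character x + T_character y + 1"])
  fix N :: nat assume N: "N > 0"
  have "(T_character x + T_character y) / real N \<le> (T_character x + T_character y + 1) / real N"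
    using N by (simp add: divide_right_mono)
  with T_character_mult_lower[OF x y N] T_character_mult_upper[OF x y N]
  show "\<bar>T_character (x * y) - T_character x * T_character y\<bar> \<le> (T_character x + T_character y + 1) / real N"
    by (simp add: abs_le_iff)
qed

text \<open>Multiplicativity extends from \<open>T\<close> to \<open>A\<close> by shifting both factors into \<open>T\<close> with
  the order unit.\<close>

lemma T_character_mult:
  assumes x: "x \<in> A" and y: "y \<in> A"
  shows "T_character (x * y) = T_character x * T_character y"
proof -
  obtain m n :: nat where "of_nat m - (- x) \<in> C" "of_nat n - (- y) \<in> C"
    using order_unit A_uminus x y by meson
  then have xT: "x + of_nat m \<in> T" and yT: "y + of_nat n \<in> T"
    using C_subset_T by (auto simp: algebra_simps)
  have "(x + of_nat m) * (y + of_nat n) = x * y + (of_nat n * x + (of_nat m * y + of_nat (m * n)))"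
    by (simp add: algebra_simps)
  then have "T_character ((x + of_nat m) * (y + of_nat n))
      = T_character (x * y) + (real n * T_character x + (real m * T_character y + real (m * n)))"
    using x y by (simp add: T_character_add T_character_of_nat_mult T_character_of_nat A_add A_mult A_of_nat)
  moreover have "T_character ((x + of_nat m) * (y + of_nat n)) = (T_character x + real m) * (T_character y + real n)"
    using T_character_mult_T[OF xT yT] x y by (simp add: T_character_add T_character_of_nat A_of_nat)
  ultimately show ?thesis
    by (simp add: algebra_simps)
qed

lemma T_character_in_characters: "T_character \<in> characters"
  unfolding characters_def
  using T_character_of_nat[of 1] T_character_add T_character_mult T_character_nonneg C_subset_T by auto

end

lemma le_square_sub_floor:
  fixes x y \<epsilon> :: real
  assumes "\<epsilon> \<le> \<bar>x - y\<bar>" "real K + 2 \<le> real n * \<epsilon>"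
  shows "real K + 1 \<le> (real n * x - of_int \<lfloor>real n * y\<rfloor>)\<^sup>2"
proof -
  let ?t = "real n * x - of_int \<lfloor>real n * y\<rfloor>"
  have "real n * \<epsilon> \<le> \<bar>real n * (x - y)\<bar>"
    using assms(1) by (simp add: abs_mult mult_left_mono)
  moreover have "\<bar>of_int \<lfloor>real n * y\<rfloor> - real n * y\<bar> \<le> 1"
    by (simp add: abs_le_iff) linarith
  moreover have "?t = real n * (x - y) - (of_int \<lfloor>real n * y\<rfloor> - real n * y)"
    by (simp add: algebra_simps)
  ultimately have t: "real K + 1 \<le> \<bar>?t\<bar>"
    using assms(2) abs_triangle_ineq2[of "real n * (x - y)" "of_int \<lfloor>real n * y\<rfloor> - real n * y"]
    by linarith
  have "real K + 1 \<le> (real K + 1) * (real K + 1)"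
    by simp
  also have "\<dots> \<le> \<bar>?t\<bar> * \<bar>?t\<bar>"
    using t by (intro mult_mono) auto
  finally show ?thesis
    by (simp add: power2_eq_square)
qed

context archimedean_preordering
begin

lemma exists_character_nonpos:
  assumes b: "b \<in> A" and "- 1 \<notin> adjoin C (- b)"
  obtains \<psi> where "\<psi> \<in> characters" "\<psi> b \<le> 0"
proof -
  have "proper_preordering (adjoin C (- b))"
    using assms preordering_adjoin[OF preordering_C] A_uminus unfolding proper_preordering_def by blast
  then obtain T where T: "adjoin C (- b) \<subseteq> T" "proper_preordering T"
    and max: "\<And>T'. proper_preordering T' \<Longrightarrow> T \<subseteq> T' \<Longrightarrow> T' = T"
    using maximal_proper_preordering_exists by blast
  interpret total_preordering A C T
    using T(2) maximal_proper_preordering_total[OF T(2) max] by unfold_locales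
  have "- b \<in> T"
    using T(1) mem_adjoin[OF preordering_C] by blast
  then have "T_character b \<le> 0"
    using T_character_nonneg T_character_uminus[OF b] by fastforce
  with T_character_in_characters that show ?thesis
    by blast
qed

text \<open>A certificate \<open>t * b = 1 + s\<close> with \<open>s, t \<in> C\<close> forces \<open>b \<in> C\<close>: choosing \<open>N\<close> with
  \<open>t \<le> N\<close>, the identity
  \<open>(N b + i + 1)(N - t) + N s + (i + 1) t = N (N b + i)\<close>
  lets one descend from \<open>N b + i \<in> C\<close> (true for large \<open>i\<close>) to \<open>N b \<in> C\<close>.\<close>

lemma in_C_if_minus_one_adjoin:
  assumes b: "b \<in> A" and "- 1 \<in> adjoin C (- b)"
  shows "b \<in> C"
proof -
  obtain s t where st: "- 1 = s + (- b) * t" "s \<in> C" "t \<in> C"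
    using assms(2) unfolding adjoin_def by blast
  obtain N0 :: nat where "of_nat N0 - t \<in> C"
    using order_unit C_subset st(3) by blast
  define N where "N = Suc N0"
  have Nt: "of_nat N - t \<in> C"
    unfolding N_def using C_add[OF \<open>of_nat N0 - t \<in> C\<close> C_one] by (simp add: algebra_simps)
  have N: "N > 0"
    by (simp add: N_def)
  have NbA: "of_nat N * b \<in> A"
    using b by (intro A_mult A_of_nat)
  obtain i0 :: nat where "of_nat i0 - (- (of_nat N * b)) \<in> C"
    using order_unit A_uminus[OF NbA] by blast
  then have i0: "of_nat N * b + of_nat i0 \<in> C"
    by (simp add: algebra_simps)
  have "of_nat N * b + of_nat i \<in> C \<Longrightarrow> of_nat N * b \<in> C" for i
  proof (induct i)
    case (Suc i)
    have "(of_nat N * b + of_nat (Suc i)) * (of_nat N - t) + of_nat N * s + of_nat (Suc i) * t \<in> C"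
      using C_add[OF C_add[OF C_mult[OF Suc(2) Nt] C_mult[OF C_of_nat st(2)]] C_mult[OF C_of_nat st(3)]] .
    also have "(of_nat N * b + of_nat (Suc i)) * (of_nat N - t) + of_nat N * s + of_nat (Suc i) * t
        = of_nat N * (of_nat N * b + of_nat i) + of_nat N * (1 + s - t * b)"
      by (simp add: algebra_simps)
    also have "\<dots> = of_nat N * (of_nat N * b + of_nat i)"
      using st(1) by (simp add: algebra_simps)
    finally have "of_nat N * b + of_nat i \<in> C"
      using C_of_nat_mult_cancel NbA N by (blast intro: A_add A_of_nat)
    then show ?case
      by (rule Suc(1))
  qed simp
  with i0 have "of_nat N * b \<in> C"
    by blast
  with C_of_nat_mult_cancel b N show ?thesis
    by blast
qed

theorem kadison_dubois:
  assumes x: "x \<in> A" and nonneg: "\<And>\<psi>. \<psi> \<in> characters \<Longrightarrow> 0 \<le> \<psi> x"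
  shows "x \<in> C"
proof (rule archimedean[OF x A_one])
  fix k :: nat
  have b: "of_nat k * x + 1 \<in> A"
    using x by (intro A_add A_mult A_of_nat A_one)
  have "- 1 \<in> adjoin C (- (of_nat k * x + 1))"
  proof (rule ccontr)
    assume "- 1 \<notin> adjoin C (- (of_nat k * x + 1))"
    then obtain \<psi> where \<psi>: "\<psi> \<in> characters" "\<psi> (of_nat k * x + 1) \<le> 0"
      using exists_character_nonpos[OF b] by blast
    then have "\<psi> (of_nat k * x + 1) = real k * \<psi> x + 1"
      using x by (simp add: characters_add characters_mult characters_of_nat characters_one A_mult A_of_nat A_one)
    moreover have "0 \<le> real k * \<psi> x"
      using nonneg[OF \<psi>(1)] by simp
    ultimately show False
      using \<psi>(2) by linarith
  qed
  with b show "of_nat k * x + 1 \<in> C"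
    by (rule in_C_if_minus_one_adjoin)
qed

subsection \<open>Characters with a prescribed positive value are dense\<close>

definition bump :: "nat \<Rightarrow> ('b \<Rightarrow> real) \<Rightarrow> 'b set \<Rightarrow> 'b" where
  "bump n \<psi>\<^sub>0 F = of_nat (card F + 1) - (\<Sum>x\<in>F. (of_nat n * x - of_int \<lfloor>real n * \<psi>\<^sub>0 x\<rfloor>)\<^sup>2)"

lemma bump_in_A: "finite F \<Longrightarrow> F \<subseteq> A \<Longrightarrow> bump n \<psi>\<^sub>0 F \<in> A"
  unfolding bump_def power2_eq_square
  by (intro A_diff A_sum A_of_nat A_mult A_of_int) auto

lemma characters_square_affine:
  assumes \<psi>: "\<psi> \<in> characters" and x: "x \<in> A"
  shows "\<psi> ((of_nat n * x - of_int m)\<^sup>2) = (real n * \<psi> x - of_int m)\<^sup>2"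
proof -
  have d: "of_nat n * x - of_int m \<in> A"
    using A_diff[OF A_mult[OF A_of_nat x] A_of_int] .
  have "\<psi> (of_nat n * x - of_int m) = \<psi> (of_nat n * x) - \<psi> (of_int m)"
    by (rule characters_diff[OF \<psi> A_mult[OF A_of_nat x] A_of_int])
  also have "\<dots> = real n * \<psi> x - of_int m"
    by (simp only: characters_mult[OF \<psi> A_of_nat x] characters_of_nat[OF \<psi>] characters_of_int[OF \<psi>])
  finally show ?thesis
    using characters_mult[OF \<psi> d d] by (simp only: power2_eq_square)
qed

lemma characters_bump:
  assumes \<psi>: "\<psi> \<in> characters" and F: "finite F" "F \<subseteq> A"
  shows "\<psi> (bump n \<psi>\<^sub>0 F) = real (card F + 1) - (\<Sum>x\<in>F. (real n * \<psi> x - of_int \<lfloor>real n * \<psi>\<^sub>0 x\<rfloor>)\<^sup>2)"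
proof -
  let ?g = "\<lambda>x. (of_nat n * x - of_int \<lfloor>real n * \<psi>\<^sub>0 x\<rfloor>)\<^sup>2"
  have gA: "?g x \<in> A" if "x \<in> F" for x
    using that F(2) A_diff[OF A_mult[OF A_of_nat] A_of_int] A_mult unfolding power2_eq_square by blast
  have "\<psi> (sum ?g F) = (\<Sum>x\<in>F. \<psi> (?g x))"
    by (rule characters_sum[OF \<psi> F(1) gA])
  also have "\<dots> = (\<Sum>x\<in>F. (real n * \<psi> x - of_int \<lfloor>real n * \<psi>\<^sub>0 x\<rfloor>)\<^sup>2)"
    using characters_square_affine[OF \<psi>] F(2) by (intro sum.cong[OF refl]) blast
  finally have "\<psi> (sum ?g F) = (\<Sum>x\<in>F. (real n * \<psi> x - of_int \<lfloor>real n * \<psi>\<^sub>0 x\<rfloor>)\<^sup>2)" .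
  moreover have "\<psi> (bump n \<psi>\<^sub>0 F) = \<psi> (of_nat (card F + 1)) - \<psi> (sum ?g F)"
    unfolding bump_def by (rule characters_diff[OF \<psi> A_of_nat A_sum[OF F(1) gA]])
  moreover have "\<psi> (of_nat (card F + 1)) = real (card F + 1)"
    by (rule characters_of_nat[OF \<psi>])
  ultimately show ?thesis
    by linarith
qed

lemma characters_bump_center:
  assumes "\<psi>\<^sub>0 \<in> characters" "finite F" "F \<subseteq> A"
  shows "1 \<le> \<psi>\<^sub>0 (bump n \<psi>\<^sub>0 F)"
proof -
  have "(\<Sum>x\<in>F. (real n * \<psi>\<^sub>0 x - of_int \<lfloor>real n * \<psi>\<^sub>0 x\<rfloor>)\<^sup>2) \<le> real (card F) * 1"
  proof (rule sum_bounded_above)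
    fix x
    have "0 \<le> real n * \<psi>\<^sub>0 x - of_int \<lfloor>real n * \<psi>\<^sub>0 x\<rfloor>" "real n * \<psi>\<^sub>0 x - of_int \<lfloor>real n * \<psi>\<^sub>0 x\<rfloor> \<le> 1"
      by linarith+
    then show "(real n * \<psi>\<^sub>0 x - of_int \<lfloor>real n * \<psi>\<^sub>0 x\<rfloor>)\<^sup>2 \<le> 1"
      by (simp add: power_le_one)
  qed
  with assms show ?thesis
    by (simp add: characters_bump)
qed

lemma characters_bump_far:
  assumes \<psi>: "\<psi> \<in> characters" and F: "finite F" "F \<subseteq> A"
    and x: "x \<in> F" "\<epsilon> \<le> \<bar>\<psi> x - \<psi>\<^sub>0 x\<bar>" and n: "real (card F + 2) \<le> real n * \<epsilon>"
  shows "\<psi> (bump n \<psi>\<^sub>0 F) \<le> 0"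
proof -
  have "real (card F) + 2 \<le> real n * \<epsilon>"
    using n by simp
  from le_square_sub_floor[OF x(2) this]
  have "real (card F + 1) \<le> (real n * \<psi> x - of_int \<lfloor>real n * \<psi>\<^sub>0 x\<rfloor>)\<^sup>2"
    by simp
  also have "\<dots> \<le> (\<Sum>y\<in>F. (real n * \<psi> y - of_int \<lfloor>real n * \<psi>\<^sub>0 y\<rfloor>)\<^sup>2)"
    by (rule member_le_sum[OF x(1) _ F(1)]) simp
  finally show ?thesis
    using \<psi> F by (simp add: characters_bump)
qed

text \<open>Each character vanishes at \<open>c\<close> or is \<open>\<le> 0\<close> at the bump, so it is nonnegative at
  \<open>-c \<cdot> bump\<close>, and Kadison--Dubois applies.\<close>

lemma minus_bump_in_C:
  assumes c: "c \<in> C" and cancel: "\<And>x. x \<in> A \<Longrightarrow> c * x \<in> C \<Longrightarrow> x \<in> C"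
    and F: "finite F" "F \<subseteq> A" and n: "real (card F + 2) \<le> real n * \<epsilon>"
    and far: "\<And>\<psi>. \<psi> \<in> characters \<Longrightarrow> \<psi> c > 0 \<Longrightarrow> \<exists>x\<in>F. \<epsilon> \<le> \<bar>\<psi> x - \<psi>\<^sub>0 x\<bar>"
  shows "- bump n \<psi>\<^sub>0 F \<in> C"
proof -
  have f: "bump n \<psi>\<^sub>0 F \<in> A" and cA: "c \<in> A"
    using bump_in_A F c C_subset by auto
  have "0 \<le> \<psi> (c * - bump n \<psi>\<^sub>0 F)" if \<psi>: "\<psi> \<in> characters" for \<psi>
  proof -
    have "\<psi> (c * - bump n \<psi>\<^sub>0 F) = \<psi> c * - \<psi> (bump n \<psi>\<^sub>0 F)" and "0 \<le> \<psi> c"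
      using \<psi> c f cA by (simp_all add: characters_mult characters_uminus characters_nonneg A_mult)
    moreover have "\<psi> (bump n \<psi>\<^sub>0 F) \<le> 0" if "\<psi> c > 0"
      using far[OF \<psi> that] characters_bump_far[OF \<psi> F _ _ n] by blast
    ultimately show ?thesis
      by (cases "\<psi> c > 0") (auto simp: mult_nonneg_nonpos)
  qed
  then have "c * - bump n \<psi>\<^sub>0 F \<in> C"
    using kadison_dubois A_mult A_uminus f cA by blast
  then show ?thesis
    using cancel A_uminus f by blast
qed

lemma exists_character_pos_near:
  assumes c: "c \<in> C" and cancel: "\<And>x. x \<in> A \<Longrightarrow> c * x \<in> C \<Longrightarrow> x \<in> C"
    and \<psi>\<^sub>0: "\<psi>\<^sub>0 \<in> characters" and F: "finite F" "F \<subseteq> A" and \<epsilon>: "\<epsilon> > 0"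
  obtains \<psi> where "\<psi> \<in> characters" "\<psi> c > 0" "\<And>x. x \<in> F \<Longrightarrow> \<bar>\<psi> x - \<psi>\<^sub>0 x\<bar> < \<epsilon>"
proof -
  have "\<exists>\<psi>\<in>characters. \<psi> c > 0 \<and> (\<forall>x\<in>F. \<bar>\<psi> x - \<psi>\<^sub>0 x\<bar> < \<epsilon>)"
  proof (rule ccontr)
    assume none: "\<not> ?thesis"
    obtain n :: nat where "real (card F + 2) / \<epsilon> \<le> real n"
      using real_arch_simple by blast
    then have "real (card F + 2) \<le> real n * \<epsilon>"
      using \<epsilon> by (simp add: field_simps)
    moreover have "\<exists>x\<in>F. \<epsilon> \<le> \<bar>\<psi> x - \<psi>\<^sub>0 x\<bar>" if "\<psi> \<in> characters" "\<psi> c > 0" for \<psi>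
      using none that by (auto simp: not_less)
    ultimately have "- bump n \<psi>\<^sub>0 F \<in> C"
      using minus_bump_in_C[OF c cancel F] by blast
    then have "\<psi>\<^sub>0 (bump n \<psi>\<^sub>0 F) \<le> 0"
      using characters_nonneg[OF \<psi>\<^sub>0] characters_uminus[OF \<psi>\<^sub>0 bump_in_A[OF F]] by fastforce
    with characters_bump_center[OF \<psi>\<^sub>0 F, of n] show False
      by simp
  qed
  with that show ?thesis
    by blast
qed

end

section \<open>Bounded fractions of a localizable archimedean ring\<close>

locale po_ring =
  fixes P :: "'a::comm_ring_1 set"
  assumes po_cring: "po_cring P"
begin

lemma P_add: "x \<in> P \<Longrightarrow> y \<in> P \<Longrightarrow> x + y \<in> P"
  and P_mult: "x \<in> P \<Longrightarrow> y \<in> P \<Longrightarrow> x * y \<in> P"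
  and P_square: "x * x \<in> P"
  and P_antisym: "x \<in> P \<Longrightarrow> - x \<in> P \<Longrightarrow> x = 0"
  using po_cring unfolding po_cring_def by blast+

lemma P_zero: "0 \<in> P"
  using P_square[of 0] by simp

lemma P_one: "1 \<in> P"
  using P_square[of 1] by simp

lemma P_of_nat: "of_nat n \<in> P"
  by (induct n) (auto simp: P_zero P_one P_add)

lemma P_of_nat_mult: "x \<in> P \<Longrightarrow> of_nat n * x \<in> P"
  by (rule P_mult[OF P_of_nat])

lemma Loc_cancel: "s \<in> Loc P \<Longrightarrow> r * s \<in> P \<Longrightarrow> r \<in> P"
  unfolding Loc_def by blast

lemma Loc_subset: "s \<in> Loc P \<Longrightarrow> s \<in> P"
  using P_add[of "s - 1" 1] P_one unfolding Loc_def by simp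

lemma Loc_non_zero_divisor: "s \<in> Loc P \<Longrightarrow> non_zero_divisor s"
  unfolding non_zero_divisor_def using Loc_cancel[of s] Loc_cancel[of s "- _"] P_zero P_antisym
  by (metis minus_mult_left neg_equal_0_iff_equal)

lemma Loc_one: "1 \<in> Loc P"
  unfolding Loc_def using P_zero by auto

lemma Loc_mult:
  assumes s: "s \<in> Loc P" and t: "t \<in> Loc P"
  shows "s * t \<in> Loc P"
proof -
  have "(s - 1) * (t - 1) + (s - 1) + (t - 1) \<in> P"
    using s t unfolding Loc_def by (intro P_add P_mult) auto
  moreover have "(s - 1) * (t - 1) + (s - 1) + (t - 1) = s * t - 1"
    by (simp add: algebra_simps)
  moreover have "r \<in> P" if "r * (s * t) \<in> P" for r
    using that Loc_cancel[OF s, of r] Loc_cancel[OF t, of "r * s"] by (simp only: mult.assoc)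
  ultimately show ?thesis
    unfolding Loc_def by simp
qed

lemma mem_Rbd_iff:
  "a \<in> Rbd P \<longleftrightarrow> snd a \<in> Loc P \<and> (\<exists>n::nat. fst a + of_nat n * snd a \<in> P \<and> of_nat n * snd a - fst a \<in> P)"
  unfolding Rbd_def Rloc_def frac_le_def pleq_def by (simp add: algebra_simps)

lemma Rbd_Loc: "a \<in> Rbd P \<Longrightarrow> snd a \<in> Loc P"
  unfolding mem_Rbd_iff by blast

lemma frac_add_Rbd:
  assumes "a \<in> Rbd P" "b \<in> Rbd P"
  shows "frac_add a b \<in> Rbd P"
proof -
  obtain n :: nat where a: "snd a \<in> Loc P" "fst a + of_nat n * snd a \<in> P" "of_nat n * snd a - fst a \<in> P"
    using assms(1) unfolding mem_Rbd_iff by blast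
  obtain m :: nat where b: "snd b \<in> Loc P" "fst b + of_nat m * snd b \<in> P" "of_nat m * snd b - fst b \<in> P"
    using assms(2) unfolding mem_Rbd_iff by blast
  have "snd b * (fst a + of_nat n * snd a) + snd a * (fst b + of_nat m * snd b) \<in> P"
    "snd b * (of_nat n * snd a - fst a) + snd a * (of_nat m * snd b - fst b) \<in> P"
    using a b Loc_subset by (auto intro!: P_add P_mult)
  with a b show ?thesis
    unfolding mem_Rbd_iff frac_add_def
    by (auto intro!: exI[of _ "n + m"] Loc_mult simp: algebra_simps)
qed

lemma frac_uminus_Rbd: "a \<in> Rbd P \<Longrightarrow> (- fst a, snd a) \<in> Rbd P"
  unfolding mem_Rbd_iff by (auto simp: algebra_simps)

lemma of_nat_Rbd: "(of_nat k, 1) \<in> Rbd P"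
proof -
  have "of_nat k + of_nat k * 1 \<in> P" "of_nat k * 1 - of_nat k \<in> P"
    using P_of_nat[of "k + k"] P_zero by simp_all
  with Loc_one show ?thesis
    unfolding mem_Rbd_iff fst_conv snd_conv by blast
qed

lemma one_Rbd: "(1, 1) \<in> Rbd P"
  using of_nat_Rbd[of 1] by simp

lemma inverse_Loc_Rbd:
  assumes "q \<in> Loc P"
  shows "(1, q) \<in> Rbd P"
proof -
  have "q - 1 \<in> P"
    using assms unfolding Loc_def by blast
  then have "1 + of_nat 1 * q \<in> P" "of_nat 1 * q - 1 \<in> P"
    using P_add[OF P_one Loc_subset[OF assms]] by simp_all
  with assms show ?thesis
    unfolding mem_Rbd_iff fst_conv snd_conv by blast
qed

lemma topspace_Ktop: "topspace (Ktop P) = Kspace P"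
  unfolding Ktop_def topology_generated_by_topspace using one_Rbd by blast

end

definition frac_of :: "'a::comm_ring_1 \<times> 'a \<Rightarrow> 'a fraction" where
  "frac_of a = Fraction (fst a) (snd a)"

lemma frac_of_of_nat: "frac_of (of_nat n, 1) = of_nat n"
  unfolding frac_of_def by (simp add: of_nat_Fraction)

lemma frac_of_one: "frac_of (1, 1) = 1"
  using frac_of_of_nat[of 1] by simp

context po_ring
begin

lemma Rbd_non_zero_divisor: "a \<in> Rbd P \<Longrightarrow> non_zero_divisor (snd a)"
  using Rbd_Loc Loc_non_zero_divisor by blast

lemma frac_of_add: "a \<in> Rbd P \<Longrightarrow> b \<in> Rbd P \<Longrightarrow> frac_of (frac_add a b) = frac_of a + frac_of b"
  unfolding frac_of_def frac_add_def by (simp add: Rbd_non_zero_divisor)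

lemma frac_of_mult: "a \<in> Rbd P \<Longrightarrow> b \<in> Rbd P \<Longrightarrow> frac_of (frac_mult a b) = frac_of a * frac_of b"
  unfolding frac_of_def frac_mult_def by (simp add: Rbd_non_zero_divisor)

lemma frac_of_uminus: "a \<in> Rbd P \<Longrightarrow> frac_of (- fst a, snd a) = - frac_of a"
  unfolding frac_of_def by (simp add: Rbd_non_zero_divisor)

lemma frac_of_eq_iff: "a \<in> Rbd P \<Longrightarrow> b \<in> Rbd P \<Longrightarrow> frac_of a = frac_of b \<longleftrightarrow> frac_eq a b"
  unfolding frac_of_def frac_eq_def by (simp add: Rbd_non_zero_divisor eq_Fraction)

definition Rbd_frac :: "'a fraction set" where
  "Rbd_frac = frac_of ` Rbd P"

definition Rbd_frac_nonneg :: "'a fraction set" where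
  "Rbd_frac_nonneg = frac_of ` {a \<in> Rbd P. fst a \<in> P}"

lemma frac_of_mem_Rbd_frac_nonneg_iff:
  assumes b: "b \<in> Rbd P"
  shows "frac_of b \<in> Rbd_frac_nonneg \<longleftrightarrow> fst b \<in> P"
proof
  assume "frac_of b \<in> Rbd_frac_nonneg"
  then obtain a where a: "a \<in> Rbd P" "fst a \<in> P" "frac_of b = frac_of a"
    unfolding Rbd_frac_nonneg_def by blast
  then have "fst b * snd a = fst a * snd b"
    using frac_of_eq_iff[OF b a(1)] unfolding frac_eq_def by simp
  also have "\<dots> \<in> P"
    using a b Rbd_Loc Loc_subset P_mult by blast
  finally show "fst b \<in> P"
    using Loc_cancel Rbd_Loc[OF a(1)] by blast
next
  assume "fst b \<in> P"
  with b show "frac_of b \<in> Rbd_frac_nonneg"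
    unfolding Rbd_frac_nonneg_def by blast
qed

lemma frac_le_zero_iff: "frac_le P (0, 1) a \<longleftrightarrow> fst a \<in> P"
  unfolding frac_le_def pleq_def by simp

end

locale loc_arch_po_ring = po_ring +
  assumes localizable: "localizable P" and archimedean: "archimedean_po P"
begin

text \<open>Divisibility by \<open>n\<close>: bounding \<open>x\<close> by some \<open>s \<in> Loc P\<close>, all the elements
  \<open>k x + (n - 1) s\<close> are positive, so the archimedean property applies.\<close>

lemma P_of_nat_mult_cancel:
  assumes n: "n > 0" and x: "of_nat n * x \<in> P"
  shows "x \<in> P"
proof -
  obtain s where s: "s \<in> Loc P" "pleq P (- s) x"
    using localizable unfolding localizable_def by blast
  then have xs: "x + s \<in> P" and "s \<in> P"
    using Loc_subset unfolding pleq_def by auto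
  have "of_nat k * x + of_nat (n - 1) * s \<in> P" for k
  proof -
    have k: "of_nat k = (of_nat (k div n) * of_nat n + of_nat (k mod n) :: 'a)"
      by (metis div_mult_mod_eq of_nat_add of_nat_mult)
    have "of_nat (n - 1) = (of_nat (n - 1 - k mod n) + of_nat (k mod n) :: 'a)"
      using n by (metis Suc_pred' le_add_diff_inverse2 less_Suc_eq_le mod_less_divisor of_nat_add)
    then have "of_nat k * x + of_nat (n - 1) * s
        = of_nat (k div n) * (of_nat n * x) + of_nat (k mod n) * (x + s) + of_nat (n - 1 - k mod n) * s"
      unfolding k by (simp add: algebra_simps)
    also have "\<dots> \<in> P"
      using P_add[OF P_add[OF P_of_nat_mult[OF x] P_of_nat_mult[OF xs]] P_of_nat_mult[OF \<open>s \<in> P\<close>]] .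
    finally show ?thesis .
  qed
  then show ?thesis
    using archimedean unfolding archimedean_po_def by blast
qed

lemma frac_mult_Rbd:
  assumes "a \<in> Rbd P" "b \<in> Rbd P"
  shows "frac_mult a b \<in> Rbd P"
proof -
  obtain n :: nat where a: "snd a \<in> Loc P" "fst a + of_nat n * snd a \<in> P" "of_nat n * snd a - fst a \<in> P"
    using assms(1) unfolding mem_Rbd_iff by blast
  obtain m :: nat where b: "snd b \<in> Loc P" "fst b + of_nat m * snd b \<in> P" "of_nat m * snd b - fst b \<in> P"
    using assms(2) unfolding mem_Rbd_iff by blast
  have "2 * (fst a * fst b + of_nat (n * m) * (snd a * snd b))
      = (of_nat n * snd a - fst a) * (of_nat m * snd b - fst b) + (fst a + of_nat n * snd a) * (fst b + of_nat m * snd b)"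
    "2 * (of_nat (n * m) * (snd a * snd b) - fst a * fst b)
      = (of_nat n * snd a - fst a) * (fst b + of_nat m * snd b) + (fst a + of_nat n * snd a) * (of_nat m * snd b - fst b)"
    by (simp_all add: algebra_simps)
  then have "2 * (fst a * fst b + of_nat (n * m) * (snd a * snd b)) \<in> P"
    "2 * (of_nat (n * m) * (snd a * snd b) - fst a * fst b) \<in> P"
    using a b by (auto intro!: P_add P_mult)
  then have "fst a * fst b + of_nat (n * m) * (snd a * snd b) \<in> P"
    "of_nat (n * m) * (snd a * snd b) - fst a * fst b \<in> P"
    using P_of_nat_mult_cancel[of 2, simplified] by blast+
  with a b show ?thesis
    unfolding mem_Rbd_iff frac_mult_def fst_conv snd_conv using Loc_mult by blast
qed

lemma frac_of_Rbd_frac: "a \<in> Rbd P \<Longrightarrow> frac_of a \<in> Rbd_frac"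
  unfolding Rbd_frac_def by blast

lemma Rbd_fracE:
  assumes "x \<in> Rbd_frac"
  obtains a where "a \<in> Rbd P" "x = frac_of a"
  using assms unfolding Rbd_frac_def by blast

lemma Rbd_frac_nonneg_subset: "Rbd_frac_nonneg \<subseteq> Rbd_frac"
  unfolding Rbd_frac_def Rbd_frac_nonneg_def by blast

lemma Rbd_frac_nonnegE:
  assumes "x \<in> Rbd_frac_nonneg"
  obtains a where "a \<in> Rbd P" "fst a \<in> P" "x = frac_of a"
  using assms unfolding Rbd_frac_nonneg_def by blast

lemma Rbd_frac_add: "x \<in> Rbd_frac \<Longrightarrow> y \<in> Rbd_frac \<Longrightarrow> x + y \<in> Rbd_frac"
  by (metis Rbd_fracE frac_add_Rbd frac_of_Rbd_frac frac_of_add)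

lemma Rbd_frac_mult: "x \<in> Rbd_frac \<Longrightarrow> y \<in> Rbd_frac \<Longrightarrow> x * y \<in> Rbd_frac"
  by (metis Rbd_fracE frac_mult_Rbd frac_of_Rbd_frac frac_of_mult)

lemma Rbd_frac_uminus: "x \<in> Rbd_frac \<Longrightarrow> - x \<in> Rbd_frac"
  by (metis Rbd_fracE frac_uminus_Rbd frac_of_Rbd_frac frac_of_uminus)

lemma Rbd_frac_one: "1 \<in> Rbd_frac"
  using frac_of_Rbd_frac[OF one_Rbd] by (simp add: frac_of_one)

lemma Rbd_frac_nonneg_add:
  assumes "x \<in> Rbd_frac_nonneg" "y \<in> Rbd_frac_nonneg"
  shows "x + y \<in> Rbd_frac_nonneg"
proof -
  obtain a b where ab: "a \<in> Rbd P" "b \<in> Rbd P" "fst a \<in> P" "fst b \<in> P" "x = frac_of a" "y = frac_of b"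
    using assms by (elim Rbd_frac_nonnegE)
  moreover have "snd a \<in> P" "snd b \<in> P"
    using ab(1,2) Rbd_Loc Loc_subset by blast+
  ultimately have "fst (frac_add a b) \<in> P"
    unfolding frac_add_def by (simp add: P_add P_mult)
  with ab show ?thesis
    by (simp add: frac_of_add frac_add_Rbd frac_of_mem_Rbd_frac_nonneg_iff flip: frac_of_add)
qed

lemma Rbd_frac_nonneg_mult:
  assumes "x \<in> Rbd_frac_nonneg" "y \<in> Rbd_frac_nonneg"
  shows "x * y \<in> Rbd_frac_nonneg"
proof -
  obtain a b where ab: "a \<in> Rbd P" "b \<in> Rbd P" "fst a \<in> P" "fst b \<in> P" "x = frac_of a" "y = frac_of b"
    using assms by (elim Rbd_frac_nonnegE)
  then have "fst (frac_mult a b) \<in> P"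
    unfolding frac_mult_def by (simp add: P_mult)
  with ab show ?thesis
    by (simp add: frac_mult_Rbd frac_of_mem_Rbd_frac_nonneg_iff flip: frac_of_mult)
qed

lemma Rbd_frac_nonneg_square:
  assumes "x \<in> Rbd_frac"
  shows "x * x \<in> Rbd_frac_nonneg"
proof -
  obtain a where a: "a \<in> Rbd P" "x = frac_of a"
    using assms by (elim Rbd_fracE)
  have "fst (frac_mult a a) \<in> P"
    unfolding frac_mult_def by (simp add: P_square)
  then have "frac_of (frac_mult a a) \<in> Rbd_frac_nonneg"
    using frac_of_mem_Rbd_frac_nonneg_iff frac_mult_Rbd[OF a(1) a(1)] by blast
  with a show ?thesis
    by (simp add: frac_of_mult)
qed

lemma Rbd_frac_order_unit:
  assumes "x \<in> Rbd_frac"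
  shows "\<exists>n::nat. of_nat n - x \<in> Rbd_frac_nonneg"
proof -
  obtain a where a: "a \<in> Rbd P" "x = frac_of a"
    using assms by (elim Rbd_fracE)
  then obtain n :: nat where n: "of_nat n * snd a - fst a \<in> P"
    unfolding mem_Rbd_iff by blast
  let ?b = "frac_add (of_nat n, 1) (- fst a, snd a)"
  have "?b \<in> Rbd P"
    using a by (intro frac_add_Rbd of_nat_Rbd frac_uminus_Rbd)
  moreover have "frac_of ?b = of_nat n - x"
    using a by (simp add: frac_of_add of_nat_Rbd frac_uminus_Rbd frac_of_of_nat frac_of_uminus)
  moreover have "fst ?b \<in> P"
    using n unfolding frac_add_def by simp
  ultimately show ?thesis
    using frac_of_mem_Rbd_frac_nonneg_iff by metis
qed

lemma Rbd_frac_nonneg_of_nat_mult_cancel: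
  assumes "x \<in> Rbd_frac" "n > 0" "of_nat n * x \<in> Rbd_frac_nonneg"
  shows "x \<in> Rbd_frac_nonneg"
proof -
  obtain a where a: "a \<in> Rbd P" "x = frac_of a"
    using assms(1) by (elim Rbd_fracE)
  then have "frac_of (frac_mult (of_nat n, 1) a) \<in> Rbd_frac_nonneg"
    using assms(3) by (simp add: frac_of_mult of_nat_Rbd frac_of_of_nat)
  then have "of_nat n * fst a \<in> P"
    using frac_of_mem_Rbd_frac_nonneg_iff frac_mult_Rbd[OF of_nat_Rbd a(1)] by (simp add: frac_mult_def)
  with a assms(2) show ?thesis
    using P_of_nat_mult_cancel frac_of_mem_Rbd_frac_nonneg_iff by blast
qed

lemma Rbd_frac_nonneg_archimedean:
  assumes x: "x \<in> Rbd_frac" and h: "h \<in> Rbd_frac"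
    and pos: "\<And>k::nat. k \<ge> 1 \<Longrightarrow> of_nat k * x + h \<in> Rbd_frac_nonneg"
  shows "x \<in> Rbd_frac_nonneg"
proof -
  obtain a b where ab: "a \<in> Rbd P" "b \<in> Rbd P" "x = frac_of a" "h = frac_of b"
    using x h by (metis Rbd_fracE)
  have "of_nat k * (fst a * snd b) + fst b * snd a \<in> P" if k: "k \<ge> 1" for k :: nat
  proof -
    let ?c = "frac_add (frac_mult (of_nat k, 1) a) b"
    have "?c \<in> Rbd P"
      using ab by (intro frac_add_Rbd frac_mult_Rbd of_nat_Rbd)
    moreover have "frac_of ?c = of_nat k * x + h"
      using ab by (simp add: frac_of_add frac_of_mult frac_mult_Rbd of_nat_Rbd frac_of_of_nat)
    ultimately have "fst ?c \<in> P"
      using pos[OF k] frac_of_mem_Rbd_frac_nonneg_iff by metis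
    then show ?thesis
      unfolding frac_add_def frac_mult_def by (simp add: algebra_simps)
  qed
  then have "fst a * snd b \<in> P"
    using archimedean unfolding archimedean_po_def by blast
  then show ?thesis
    using ab Loc_cancel Rbd_Loc frac_of_mem_Rbd_frac_nonneg_iff by blast
qed

sublocale frac: archimedean_preordering Rbd_frac Rbd_frac_nonneg
  by unfold_locales
    (simp_all add: Rbd_frac_add Rbd_frac_mult Rbd_frac_uminus Rbd_frac_one Rbd_frac_nonneg_subset
      Rbd_frac_nonneg_add Rbd_frac_nonneg_mult Rbd_frac_nonneg_square Rbd_frac_order_unit
      Rbd_frac_nonneg_of_nat_mult_cancel Rbd_frac_nonneg_archimedean)

end

section \<open>Points of \<open>\<K>(R)\<close> as characters\<close>

context
  fixes P :: "'a::comm_ring_1 set" and \<phi> :: "'a \<times> 'a \<Rightarrow> real"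
  assumes \<phi>: "\<phi> \<in> Kspace P"
begin

lemma Kspace_frac_eq: "a \<in> Rbd P \<Longrightarrow> b \<in> Rbd P \<Longrightarrow> frac_eq a b \<Longrightarrow> \<phi> a = \<phi> b"
  and Kspace_one: "\<phi> (1, 1) = 1"
  and Kspace_add: "a \<in> Rbd P \<Longrightarrow> b \<in> Rbd P \<Longrightarrow> \<phi> (frac_add a b) = \<phi> a + \<phi> b"
  and Kspace_mult: "a \<in> Rbd P \<Longrightarrow> b \<in> Rbd P \<Longrightarrow> \<phi> (frac_mult a b) = \<phi> a * \<phi> b"
  and Kspace_nonneg: "a \<in> Rbd P \<Longrightarrow> frac_le P (0, 1) a \<Longrightarrow> 0 \<le> \<phi> a"
  using \<phi> unfolding Kspace_def by blast+

end

context loc_arch_po_ring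
begin

definition K_of_character :: "('a fraction \<Rightarrow> real) \<Rightarrow> 'a \<times> 'a \<Rightarrow> real" where
  "K_of_character \<psi> a = (if a \<in> Rbd P then \<psi> (frac_of a) else 0)"

definition character_of_K :: "('a \<times> 'a \<Rightarrow> real) \<Rightarrow> 'a fraction \<Rightarrow> real" where
  "character_of_K \<phi> x = \<phi> (SOME a. a \<in> Rbd P \<and> frac_of a = x)"

lemma K_of_character_in_Kspace:
  assumes \<psi>: "\<psi> \<in> frac.characters"
  shows "K_of_character \<psi> \<in> Kspace P"
  unfolding Kspace_def mem_Collect_eq
proof (intro conjI ballI allI impI)
  show "K_of_character \<psi> a = 0" if "a \<notin> Rbd P" for a
    using that unfolding K_of_character_def by simp
  show "K_of_character \<psi> a = K_of_character \<psi> b" if "a \<in> Rbd P" "b \<in> Rbd P" "frac_eq a b" for a b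
    using that frac_of_eq_iff[of a b] unfolding K_of_character_def by simp
  show "K_of_character \<psi> (1, 1) = 1"
    unfolding K_of_character_def using frac.characters_one[OF \<psi>] one_Rbd by (simp add: frac_of_one)
  show "K_of_character \<psi> (frac_add a b) = K_of_character \<psi> a + K_of_character \<psi> b"
    and "K_of_character \<psi> (frac_mult a b) = K_of_character \<psi> a * K_of_character \<psi> b"
    if "a \<in> Rbd P" "b \<in> Rbd P" for a b
    using that frac.characters_add[OF \<psi>] frac.characters_mult[OF \<psi>] frac_of_Rbd_frac
    unfolding K_of_character_def
    by (simp_all add: frac_add_Rbd frac_mult_Rbd frac_of_add frac_of_mult)
  show "0 \<le> K_of_character \<psi> a" if "a \<in> Rbd P" "frac_le P (0, 1) a" for a
    using that frac.characters_nonneg[OF \<psi>] frac_of_mem_Rbd_frac_nonneg_iff frac_le_zero_iff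
    unfolding K_of_character_def by simp
qed

lemma character_of_K_frac_of:
  assumes \<phi>: "\<phi> \<in> Kspace P" and a: "a \<in> Rbd P"
  shows "character_of_K \<phi> (frac_of a) = \<phi> a"
proof -
  let ?b = "SOME b. b \<in> Rbd P \<and> frac_of b = frac_of a"
  have b: "?b \<in> Rbd P" "frac_of ?b = frac_of a"
    using someI[of "\<lambda>b. b \<in> Rbd P \<and> frac_of b = frac_of a", OF conjI[OF a refl]] by blast+
  then have "frac_eq ?b a"
    using frac_of_eq_iff[OF b(1) a] by simp
  then show ?thesis
    unfolding character_of_K_def by (rule Kspace_frac_eq[OF \<phi> b(1) a])
qed

lemma character_of_K_in_characters:
  assumes \<phi>: "\<phi> \<in> Kspace P"
  shows "character_of_K \<phi> \<in> frac.characters"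
  unfolding frac.characters_def mem_Collect_eq
proof (intro conjI ballI)
  show "character_of_K \<phi> 1 = 1"
    using character_of_K_frac_of[OF \<phi> one_Rbd] Kspace_one[OF \<phi>] by (simp add: frac_of_one)
next
  fix x y assume "x \<in> Rbd_frac" "y \<in> Rbd_frac"
  then obtain a b where a: "a \<in> Rbd P" "x = frac_of a" and b: "b \<in> Rbd P" "y = frac_of b"
    by (elim Rbd_fracE)
  have "character_of_K \<phi> (x + y) = \<phi> (frac_add a b)"
    using a b frac_add_Rbd[OF a(1) b(1)] by (simp add: character_of_K_frac_of[OF \<phi>] flip: frac_of_add)
  with a b \<phi> show "character_of_K \<phi> (x + y) = character_of_K \<phi> x + character_of_K \<phi> y"
    by (simp add: character_of_K_frac_of Kspace_add)
  have "character_of_K \<phi> (x * y) = \<phi> (frac_mult a b)"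
    using a b frac_mult_Rbd[OF a(1) b(1)] by (simp add: character_of_K_frac_of[OF \<phi>] flip: frac_of_mult)
  with a b \<phi> show "character_of_K \<phi> (x * y) = character_of_K \<phi> x * character_of_K \<phi> y"
    by (simp add: character_of_K_frac_of Kspace_mult)
next
  fix x assume "x \<in> Rbd_frac_nonneg"
  then obtain a where a: "a \<in> Rbd P" "fst a \<in> P" "x = frac_of a"
    by (elim Rbd_frac_nonnegE)
  then have "0 \<le> \<phi> a"
    using Kspace_nonneg[OF \<phi> a(1)] frac_le_zero_iff by blast
  with a \<phi> show "0 \<le> character_of_K \<phi> x"
    by (simp add: character_of_K_frac_of)
qed

lemma inverse_Loc_mult_cancel:
  assumes q: "q \<in> Loc P" and x: "x \<in> Rbd_frac"
    and qx: "frac_of (1, q) * x \<in> Rbd_frac_nonneg"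
  shows "x \<in> Rbd_frac_nonneg"
proof -
  obtain a where a: "a \<in> Rbd P" "x = frac_of a"
    using x by (elim Rbd_fracE)
  have qa: "frac_mult (1, q) a \<in> Rbd P"
    by (rule frac_mult_Rbd[OF inverse_Loc_Rbd[OF q] a(1)])
  have "frac_of (frac_mult (1, q) a) \<in> Rbd_frac_nonneg"
    using qx a(2) frac_of_mult[OF inverse_Loc_Rbd[OF q] a(1)] by simp
  then have "fst a \<in> P"
    using frac_of_mem_Rbd_frac_nonneg_iff[OF qa] unfolding frac_mult_def by simp
  then show ?thesis
    using frac_of_mem_Rbd_frac_nonneg_iff[OF a(1)] a(2) by simp
qed

lemma exists_O_fin_near:
  assumes q: "q \<in> Loc P" and \<phi>: "\<phi> \<in> Kspace P"
    and F: "finite F" "F \<subseteq> Rbd P" and \<epsilon>: "\<epsilon> > 0"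
  obtains \<psi> where "\<psi> \<in> O_fin P q" "\<And>a. a \<in> F \<Longrightarrow> \<bar>\<psi> a - \<phi> a\<bar> < \<epsilon>"
proof -
  have q_nonneg: "frac_of (1, q) \<in> Rbd_frac_nonneg"
    using frac_of_mem_Rbd_frac_nonneg_iff[OF inverse_Loc_Rbd[OF q]] P_one by simp
  have F_frac: "frac_of ` F \<subseteq> Rbd_frac"
    using F(2) frac_of_Rbd_frac by blast
  obtain \<theta> where \<theta>: "\<theta> \<in> frac.characters" "\<theta> (frac_of (1, q)) > 0"
    and near: "\<And>x. x \<in> frac_of ` F \<Longrightarrow> \<bar>\<theta> x - character_of_K \<phi> x\<bar> < \<epsilon>"
    using frac.exists_character_pos_near[OF q_nonneg inverse_Loc_mult_cancel[OF q]
          character_of_K_in_characters[OF \<phi>] finite_imageI[OF F(1)] F_frac \<epsilon>] by blast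
  show ?thesis
  proof (rule that)
    show "K_of_character \<theta> \<in> O_fin P q"
      using K_of_character_in_Kspace[OF \<theta>(1)] \<theta>(2) inverse_Loc_Rbd[OF q]
      unfolding O_fin_def K_of_character_def by simp
    fix a assume a: "a \<in> F"
    then have "a \<in> Rbd P"
      using F(2) by blast
    with near[of "frac_of a"] a show "\<bar>K_of_character \<theta> a - \<phi> a\<bar> < \<epsilon>"
      unfolding K_of_character_def by (simp add: character_of_K_frac_of[OF \<phi>])
  qed
qed

end

definition K_nbhd :: "'a::comm_ring_1 set \<Rightarrow> ('a \<times> 'a \<Rightarrow> real) \<Rightarrow> ('a \<times> 'a) set \<Rightarrow> real \<Rightarrow> ('a \<times> 'a \<Rightarrow> real) set" where
  "K_nbhd P \<phi> F \<epsilon> = {\<psi> \<in> Kspace P. \<forall>a\<in>F. \<bar>\<psi> a - \<phi> a\<bar> < \<epsilon>}"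

definition K_interior_point :: "'a::comm_ring_1 set \<Rightarrow> ('a \<times> 'a \<Rightarrow> real) set \<Rightarrow> ('a \<times> 'a \<Rightarrow> real) \<Rightarrow> bool" where
  "K_interior_point P W \<phi> \<longleftrightarrow> (\<exists>F \<epsilon>. finite F \<and> F \<subseteq> Rbd P \<and> \<epsilon> > 0 \<and> K_nbhd P \<phi> F \<epsilon> \<subseteq> W)"

lemma K_nbhd_antimono: "F \<subseteq> G \<Longrightarrow> \<delta> \<le> \<epsilon> \<Longrightarrow> K_nbhd P \<phi> G \<delta> \<subseteq> K_nbhd P \<phi> F \<epsilon>"
  unfolding K_nbhd_def by fastforce

lemma K_interior_point_mono: "K_interior_point P S \<phi> \<Longrightarrow> S \<subseteq> T \<Longrightarrow> K_interior_point P T \<phi>"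
  unfolding K_interior_point_def by (meson order_trans)

lemma K_interior_point_Int:
  assumes "K_interior_point P S \<phi>" "K_interior_point P T \<phi>"
  shows "K_interior_point P (S \<inter> T) \<phi>"
proof -
  obtain F1 \<epsilon>1 F2 \<epsilon>2 where
    S: "finite F1" "F1 \<subseteq> Rbd P" "\<epsilon>1 > 0" "K_nbhd P \<phi> F1 \<epsilon>1 \<subseteq> S" and
    T: "finite F2" "F2 \<subseteq> Rbd P" "\<epsilon>2 > 0" "K_nbhd P \<phi> F2 \<epsilon>2 \<subseteq> T"
    using assms unfolding K_interior_point_def by meson
  have "K_nbhd P \<phi> (F1 \<union> F2) (min \<epsilon>1 \<epsilon>2) \<subseteq> S \<inter> T"
    using K_nbhd_antimono[of F1 "F1 \<union> F2" "min \<epsilon>1 \<epsilon>2" \<epsilon>1 P \<phi>]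
      K_nbhd_antimono[of F2 "F1 \<union> F2" "min \<epsilon>1 \<epsilon>2" \<epsilon>2 P \<phi>] S(4) T(4) by auto
  moreover have "finite (F1 \<union> F2)" "F1 \<union> F2 \<subseteq> Rbd P" "min \<epsilon>1 \<epsilon>2 > 0"
    using S T by simp_all
  ultimately show ?thesis
    unfolding K_interior_point_def by blast
qed

lemma K_interior_point_basic:
  assumes a: "a \<in> Rbd P" and V: "open V" "\<phi> a \<in> V"
  shows "K_interior_point P {\<psi> \<in> Kspace P. \<psi> a \<in> V} \<phi>"
proof -
  obtain \<epsilon> where \<epsilon>: "\<epsilon> > 0" "\<And>y. dist y (\<phi> a) < \<epsilon> \<Longrightarrow> y \<in> V"
    using V unfolding open_dist by blast
  then have "K_nbhd P \<phi> {a} \<epsilon> \<subseteq> {\<psi> \<in> Kspace P. \<psi> a \<in> V}"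
    unfolding K_nbhd_def dist_real_def by auto
  with a \<epsilon>(1) show ?thesis
    unfolding K_interior_point_def by (intro exI[of _ "{a}"] exI[of _ \<epsilon>]) simp
qed

lemma openin_Ktop_interior_point:
  assumes "openin (Ktop P) W" "\<phi> \<in> W"
  shows "K_interior_point P W \<phi>"
proof -
  have "generate_topology_on {{\<phi> \<in> Kspace P. \<phi> a \<in> V} | a V. a \<in> Rbd P \<and> open V} W"
    using assms(1) unfolding Ktop_def openin_topology_generated_by_iff .
  then have "\<forall>\<phi>\<in>W. K_interior_point P W \<phi>"
  proof (induct rule: generate_topology_on.induct)
    case (Int S T)
    then show ?case
      by (simp add: K_interior_point_Int)
  next
    case (UN K)
    then show ?case
      by (meson K_interior_point_mono UnionE Union_upper)
  next
    case (Basis S)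
    then obtain a V where "S = {\<phi> \<in> Kspace P. \<phi> a \<in> V}" "a \<in> Rbd P" "open V"
      by blast
    then show ?case
      by (simp add: K_interior_point_basic)
  qed simp
  with assms(2) show ?thesis
    by blast
qed

theorem proposition29:
  fixes P :: "('a::comm_ring_1) set" and q :: 'a
  assumes "po_cring P" and "localizable P" and "archimedean_po P"
    and "q \<in> Loc P"
  shows "Ktop P closure_of O_fin P q = topspace (Ktop P)"
  unfolding dense_intersects_open
proof (intro allI impI)
  interpret loc_arch_po_ring P
    using assms(1-3) by unfold_locales
  fix W assume W: "openin (Ktop P) W \<and> W \<noteq> {}"
  then obtain \<phi> where \<phi>: "\<phi> \<in> W"
    by blast
  then have "\<phi> \<in> Kspace P"
    using W openin_subset topspace_Ktop by blast
  obtain F \<epsilon> where F: "finite F" "F \<subseteq> Rbd P" and "\<epsilon> > 0" and nbhd: "K_nbhd P \<phi> F \<epsilon> \<subseteq> W"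
    using openin_Ktop_interior_point[of P W \<phi>] W \<phi> unfolding K_interior_point_def by meson
  obtain \<psi> where "\<psi> \<in> O_fin P q" "\<And>a. a \<in> F \<Longrightarrow> \<bar>\<psi> a - \<phi> a\<bar> < \<epsilon>"
    using exists_O_fin_near[OF assms(4) \<open>\<phi> \<in> Kspace P\<close> F \<open>\<epsilon> > 0\<close>] by metis
  with nbhd show "O_fin P q \<inter> W \<noteq> {}"
    unfolding O_fin_def K_nbhd_def by blast
qed

end
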